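(* Let $x,y\in(0,\infty)$ and $n,m\in\mathbb{N}$ be such that $\frac{x}{1+y}\le1$. Then: (i) $\displaystyle\prod_{i=m}^n\Big(1-\frac{x}{i+y}\Big)\le\Big(\frac{n+1+y}{m+y}\Big)^{-x}$; (ii) $\displaystyle\sum_{i=1}^n\frac{1}{(i+y)^2}\prod_{j=i+1}^n\Big(1-\frac{x}{j+y}\Big)\le\exp\Big(\frac{x}{1+y}\Big)\cdot\begin{cases}(n+1+y)^{-1}\frac{1}{x-1}, & x\in(1,\infty),\\ (n+1+y)^{-1}\big(1+\ln(n+y)\big), & x=1,\\ (n+1+y)^{-x}\frac{(1+y)^{x-2}(x-2-y)}{x-1}, & x\in[0,1).\end{cases}$
   Context: Empty products are equal to $1$. *)

theory Defs
  imports Complex_Main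
begin

end

theory Submission
  imports Defs
begin

text \<open>
  Since \<open>ln (a + 1) - ln a \<le> 1 / a\<close>, each factor satisfies
  \<open>1 - x / a \<le> exp (- x * (ln (a + 1) - ln a))\<close>, and the product of these exponentials
  telescopes to \<open>((n + 1 + y) / (m + y)) powr (- x)\<close>; this is (i).
  Applied to the inner product, (i) bounds the \<open>i\<close>-th summand of (ii) by
  \<open>exp (x / (1 + y)) * (n + 1 + y) powr (- x) * (i + y) powr (x - 2)\<close>. The remaining sum of
  powers is compared with the integral of \<open>t powr (x - 2)\<close> by the mean value theorem on unit
  intervals, and the three cases of the bound are the three shapes of its antiderivative.
\<close>

lemma sum_le_telescope:
  fixes f g :: "nat \<Rightarrow> 'a::ordered_ab_group_add"
  assumes "m \<le> Suc n" and "\<And>i. m \<le> i \<Longrightarrow> i \<le> n \<Longrightarrow> f i \<le> g (Suc i) - g i"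
  shows "(\<Sum>i=m..n. f i) \<le> g (Suc n) - g m"
proof -
  have "(\<Sum>i=m..n. f i) \<le> (\<Sum>i=m..n. g (Suc i) - g i)"
    using assms(2) by (intro sum_mono) auto
  also have "\<dots> = g (Suc n) - g m"
    using assms(1) by (rule sum_Suc_diff)
  finally show ?thesis .
qed

lemma ln_Suc_diff_le: "0 < a \<Longrightarrow> ln (a + 1) - ln a \<le> 1 / (a :: real)"
  using ln_diff_le[of "a + 1" a] by simp

lemma inverse_Suc_le_ln_diff: "0 < a \<Longrightarrow> 1 / (a + 1) \<le> ln (a + 1) - ln (a :: real)"
  using ln_diff_le[of a "a + 1"] by (simp add: diff_divide_distrib)

lemma one_minus_div_le_exp_ln_diff:
  fixes x a :: real
  assumes "0 \<le> x" and "0 < a"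
  shows "1 - x / a \<le> exp (- x * (ln (a + 1) - ln a))"
proof -
  have "x * (ln (a + 1) - ln a) \<le> x * (1 / a)"
    using assms by (intro mult_left_mono ln_Suc_diff_le)
  moreover have "1 - x * (ln (a + 1) - ln a) \<le> exp (- x * (ln (a + 1) - ln a))"
    using exp_ge_add_one_self[of "- x * (ln (a + 1) - ln a)"] by simp
  ultimately show ?thesis by simp
qed

lemma prod_one_minus_le_powr:
  fixes x y :: real and m n :: nat
  assumes "0 \<le> x" and "0 \<le> y" and "x \<le> 1 + y" and "1 \<le> m"
  shows "(\<Prod>i=m..n. 1 - x / (real i + y)) \<le> ((real n + 1 + y) / (real m + y)) powr (- x)"
proof (cases "m \<le> Suc n")
  case True
  define g where "g i = - x * ln (real i + y)" for i :: nat
  have "(\<Prod>i=m..n. 1 - x / (real i + y)) \<le> (\<Prod>i=m..n. exp (g (Suc i) - g i))"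
  proof (rule prod_mono)
    fix i assume "i \<in> {m..n}"
    then have "x \<le> real i + y" and "0 < real i + y"
      using assms by auto
    then show "0 \<le> 1 - x / (real i + y) \<and> 1 - x / (real i + y) \<le> exp (g (Suc i) - g i)"
      using one_minus_div_le_exp_ln_diff[of x "real i + y"] assms
      by (auto simp: g_def algebra_simps)
  qed
  also have "\<dots> = exp (g (Suc n) - g m)"
    by (simp add: exp_sum[symmetric] sum_Suc_diff[OF True])
  also have "\<dots> = ((real n + 1 + y) / (real m + y)) powr (- x)"
    using assms by (simp add: g_def powr_def ln_div algebra_simps)
  finally show ?thesis .
next
  case False
  then have "1 powr (- x) \<le> ((real n + 1 + y) / (real m + y)) powr (- x)"
    using assms by (intro powr_mono2') auto
  with False show ?thesis by simp
qed

lemma add_one_powr_le_powr_mult_exp: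
  fixes b x :: real
  assumes "0 < b" and "0 \<le> x"
  shows "(b + 1) powr x \<le> b powr x * exp (x / b)"
proof -
  have "(b + 1) powr x = exp (x * ln b + x * (ln (b + 1) - ln b))"
    using assms by (simp add: powr_def algebra_simps)
  also have "\<dots> \<le> exp (x * ln b + x * (1 / b))"
    using assms mult_left_mono[OF ln_Suc_diff_le[of b], of x] by simp
  also have "\<dots> = b powr x * exp (x / b)"
    using assms by (simp add: powr_def exp_add)
  finally show ?thesis .
qed

lemma inverse_square_mult_prod_le_powr:
  fixes x y :: real and i n :: nat
  assumes "0 \<le> x" and "0 \<le> y" and "x \<le> 1 + y" and "1 \<le> i"
  shows "(1 / (real i + y)^2) * (\<Prod>j=i+1..n. 1 - x / (real j + y))
    \<le> exp (x / (1 + y)) * (real n + 1 + y) powr (- x) * (real i + y) powr (x - 2)"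
proof -
  define b where "b = real i + y"
  have b: "0 < b" "1 + y \<le> b"
    using assms by (auto simp: b_def)
  have "(\<Prod>j=i+1..n. 1 - x / (real j + y)) \<le> ((real n + 1 + y) / (b + 1)) powr (- x)"
    using prod_one_minus_le_powr[of x y "i + 1" n] assms by (simp add: b_def add_ac)
  also have "\<dots> = (real n + 1 + y) powr (- x) * (b + 1) powr x"
    using assms b by (simp add: powr_divide powr_minus_divide)
  also have "\<dots> \<le> (real n + 1 + y) powr (- x) * (b powr x * exp (x / (1 + y)))"
  proof (rule mult_left_mono)
    have "exp (x / b) \<le> exp (x / (1 + y))"
      using assms b by (simp add: divide_left_mono)
    then show "(b + 1) powr x \<le> b powr x * exp (x / (1 + y))"
      using add_one_powr_le_powr_mult_exp[of b x] assms b
      by (meson mult_left_mono order_trans powr_ge_zero)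
  qed simp
  finally have "(1 / b^2) * (\<Prod>j=i+1..n. 1 - x / (real j + y))
      \<le> (1 / b^2) * ((real n + 1 + y) powr (- x) * (b powr x * exp (x / (1 + y))))"
    by (rule mult_left_mono) simp
  also have "\<dots> = exp (x / (1 + y)) * (real n + 1 + y) powr (- x) * b powr (x - 2)"
    using b by (simp add: powr_diff powr_numeral)
  finally show ?thesis
    by (simp add: b_def)
qed

lemma diff_powr_div_eq_powr_mean:
  fixes a p :: real
  assumes "0 < a" and "p \<noteq> -1"
  obtains c where "a < c" and "c < a + 1"
    and "((a + 1) powr (p + 1) - a powr (p + 1)) / (p + 1) = c powr p"
proof -
  have "((\<lambda>t. t powr (p + 1)) has_real_derivative (p + 1) * t powr p) (at t)" if "0 < t" for t
    using has_real_derivative_powr[OF that, of "p + 1"] by simp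
  then have "\<exists>c. a < c \<and> c < a + 1 \<and>
      (a + 1) powr (p + 1) - a powr (p + 1) = ((a + 1) - a) * ((p + 1) * c powr p)"
    using assms by (intro MVT2) auto
  with assms that show ?thesis
    by auto
qed

lemma powr_le_diff_powr_div:
  fixes a p :: real
  assumes "0 < a" and "0 \<le> p"
  shows "a powr p \<le> ((a + 1) powr (p + 1) - a powr (p + 1)) / (p + 1)"
proof -
  obtain c where "a < c" "c < a + 1" "((a + 1) powr (p + 1) - a powr (p + 1)) / (p + 1) = c powr p"
    using diff_powr_div_eq_powr_mean[of a p] assms by auto
  with assms show ?thesis
    by (simp add: powr_mono2)
qed

lemma powr_Suc_le_diff_powr_div:
  fixes a p :: real
  assumes "0 < a" and "p \<le> 0" and "p \<noteq> -1"
  shows "(a + 1) powr p \<le> ((a + 1) powr (p + 1) - a powr (p + 1)) / (p + 1)"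
proof -
  obtain c where "a < c" "c < a + 1" "((a + 1) powr (p + 1) - a powr (p + 1)) / (p + 1) = c powr p"
    using diff_powr_div_eq_powr_mean[of a p] assms by auto
  with assms show ?thesis
    by (simp add: powr_mono2')
qed

lemma sum_powr_le_diff_powr_div:
  fixes p y :: real
  assumes "p \<le> 0" and "p \<noteq> -1" and "0 < y" and "1 \<le> m" and "m \<le> Suc n"
  shows "(\<Sum>i=m..n. (real i + y) powr p)
    \<le> ((real n + y) powr (p + 1) - (real m - 1 + y) powr (p + 1)) / (p + 1)"
proof -
  define g where "g i = (real i - 1 + y) powr (p + 1) / (p + 1)" for i :: nat
  have "(\<Sum>i=m..n. (real i + y) powr p) \<le> g (Suc n) - g m"
  proof (rule sum_le_telescope)
    fix i :: nat assume "m \<le> i"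
    then have "(real i - 1 + y + 1) powr p
        \<le> ((real i - 1 + y + 1) powr (p + 1) - (real i - 1 + y) powr (p + 1)) / (p + 1)"
      using assms by (intro powr_Suc_le_diff_powr_div) auto
    then show "(real i + y) powr p \<le> g (Suc i) - g i"
      by (simp add: g_def diff_divide_distrib)
  qed (fact assms)
  then show ?thesis
    by (simp add: g_def diff_divide_distrib)
qed

lemma sum_inverse_le_ln_diff:
  fixes y :: real
  assumes "0 < y" and "1 \<le> m" and "m \<le> Suc n"
  shows "(\<Sum>i=m..n. 1 / (real i + y)) \<le> ln (real n + y) - ln (real m - 1 + y)"
proof -
  define g where "g i = ln (real i - 1 + y)" for i :: nat
  have "(\<Sum>i=m..n. 1 / (real i + y)) \<le> g (Suc n) - g m"
  proof (rule sum_le_telescope)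
    fix i :: nat assume "m \<le> i"
    then have "1 / (real i - 1 + y + 1) \<le> ln (real i - 1 + y + 1) - ln (real i - 1 + y)"
      using assms by (intro inverse_Suc_le_ln_diff) auto
    then show "1 / (real i + y) \<le> g (Suc i) - g i"
      by (simp add: g_def)
  qed (fact assms)
  then show ?thesis
    by (simp add: g_def)
qed

lemma sum_powr_le_gt_minus_one:
  fixes p y :: real
  assumes "-1 < p" and "0 < y"
  shows "(\<Sum>i=1..n. (real i + y) powr p) \<le> (real n + 1 + y) powr (p + 1) / (p + 1)"
proof (cases "0 \<le> p")
  case True
  define g where "g i = (real i + y) powr (p + 1) / (p + 1)" for i :: nat
  have "(\<Sum>i=1..n. (real i + y) powr p) \<le> g (Suc n) - g 1"
  proof (rule sum_le_telescope)
    fix i :: nat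
    have "(real i + y) powr p \<le> ((real i + y + 1) powr (p + 1) - (real i + y) powr (p + 1)) / (p + 1)"
      using assms True by (intro powr_le_diff_powr_div) auto
    then show "(real i + y) powr p \<le> g (Suc i) - g i"
      by (simp add: g_def diff_divide_distrib add_ac)
  qed simp
  also have "\<dots> \<le> g (Suc n)"
    using assms by (simp add: g_def)
  finally show ?thesis
    by (simp add: g_def add_ac)
next
  case False
  then have "(\<Sum>i=1..n. (real i + y) powr p) \<le> ((real n + y) powr (p + 1) - y powr (p + 1)) / (p + 1)"
    using assms sum_powr_le_diff_powr_div[of p y 1 n] by simp
  also have "\<dots> \<le> (real n + 1 + y) powr (p + 1) / (p + 1)"
  proof (rule divide_right_mono)
    have "(real n + y) powr (p + 1) \<le> (real n + 1 + y) powr (p + 1)"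
      using assms by (intro powr_mono2) auto
    then show "(real n + y) powr (p + 1) - y powr (p + 1) \<le> (real n + 1 + y) powr (p + 1)"
      using powr_ge_zero[of y "p + 1"] by linarith
  qed (use assms in simp)
  finally show ?thesis .
qed

lemma sum_powr_le_lt_minus_one:
  fixes p y :: real
  assumes "p < -1" and "0 < y" and "1 \<le> n"
  shows "(\<Sum>i=1..n. (real i + y) powr p) \<le> (1 + y) powr p - (1 + y) powr (p + 1) / (p + 1)"
proof -
  have "(\<Sum>i=1..n. (real i + y) powr p) = (1 + y) powr p + (\<Sum>i=2..n. (real i + y) powr p)"
    using assms by (simp add: sum.atLeast_Suc_atMost numeral_2_eq_2 add_ac)
  moreover have "(\<Sum>i=2..n. (real i + y) powr p)
      \<le> ((real n + y) powr (p + 1) - (1 + y) powr (p + 1)) / (p + 1)"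
    using assms sum_powr_le_diff_powr_div[of p y 2 n] by (simp add: add_ac)
  moreover have "(real n + y) powr (p + 1) / (p + 1) \<le> 0"
    using assms by (intro divide_nonneg_neg) auto
  ultimately show ?thesis
    by (simp add: diff_divide_distrib)
qed

lemma sum_inverse_le_one_plus_ln:
  fixes y :: real
  assumes "0 < y" and "1 \<le> n"
  shows "(\<Sum>i=1..n. 1 / (real i + y)) \<le> 1 + ln (real n + y)"
proof -
  have "(\<Sum>i=1..n. 1 / (real i + y)) = 1 / (1 + y) + (\<Sum>i=2..n. 1 / (real i + y))"
    using assms by (simp add: sum.atLeast_Suc_atMost numeral_2_eq_2 add_ac)
  moreover have "(\<Sum>i=2..n. 1 / (real i + y)) \<le> ln (real n + y) - ln (1 + y)"
    using assms sum_inverse_le_ln_diff[of y 2 n] by (simp add: add_ac)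
  moreover have "1 / (1 + y) \<le> 1" and "0 \<le> ln (1 + y)"
    using assms by auto
  ultimately show ?thesis
    by simp
qed

lemma powr_minus_mult_sum_powr_le:
  fixes x y :: real and n :: nat
  assumes "0 < y" and "1 \<le> n"
  shows "(real n + 1 + y) powr (- x) * (\<Sum>i=1..n. (real i + y) powr (x - 2))
    \<le> (if x > 1 then (real n + 1 + y) powr (-1) * (1 / (x - 1))
        else if x = 1 then (real n + 1 + y) powr (-1) * (1 + ln (real n + y))
        else (real n + 1 + y) powr (- x) * ((1 + y) powr (x - 2) * (x - 2 - y) / (x - 1)))"
proof -
  let ?N = "real n + 1 + y" and ?S = "\<Sum>i=1..n. (real i + y) powr (x - 2)"
  consider "1 < x" | "x = 1" | "x < 1"
    by linarith
  then show ?thesis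
  proof cases
    case 1
    have "?S \<le> ?N powr (x - 1) / (x - 1)"
      using sum_powr_le_gt_minus_one[of "x - 2" y n] assms 1 by simp
    then have "?N powr (- x) * ?S \<le> ?N powr (- x) * (?N powr (x - 1) / (x - 1))"
      by (rule mult_left_mono) simp
    also have "\<dots> = ?N powr (-1) * (1 / (x - 1))"
      by (simp add: powr_add[symmetric])
    finally show ?thesis
      using 1 by simp
  next
    case 2
    have "?S = (\<Sum>i=1..n. 1 / (real i + y))"
      using 2 assms by (intro sum.cong) (auto simp: powr_minus_divide)
    also have "\<dots> \<le> 1 + ln (real n + y)"
      using assms by (rule sum_inverse_le_one_plus_ln)
    finally have "?N powr (- x) * ?S \<le> ?N powr (- x) * (1 + ln (real n + y))"
      by (rule mult_left_mono) simp
    then show ?thesis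
      using 2 by simp
  next
    case 3
    have "?S \<le> (1 + y) powr (x - 2) - (1 + y) powr (x - 1) / (x - 1)"
      using sum_powr_le_lt_minus_one[of "x - 2" y n] assms 3 by simp
    also have "\<dots> = (1 + y) powr (x - 2) * (x - 2 - y) / (x - 1)"
    proof -
      have "(1 + y) powr (x - 1) = (1 + y) powr (x - 2) * (1 + y)"
        using assms powr_add[of "1 + y" "x - 2" 1] by simp
      then show ?thesis
        using 3 by (simp add: field_simps)
    qed
    finally have "?N powr (- x) * ?S \<le> ?N powr (- x) * ((1 + y) powr (x - 2) * (x - 2 - y) / (x - 1))"
      by (rule mult_left_mono) simp
    then show ?thesis
      using 3 by simp
  qed
qed

theorem lemmaA1:
  fixes x y :: real and n m :: nat
  assumes "x > 0" and "y > 0" and "n \<ge> 1" and "m \<ge> 1"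
    and "x / (1 + y) \<le> 1"
  shows "((\<Prod>i=m..n. 1 - x / (real i + y)) \<le> ((real n + 1 + y) / (real m + y)) powr (- x)) \<and>
         ((\<Sum>i=1..n. (1 / (real i + y)^2) * (\<Prod>j=i+1..n. 1 - x / (real j + y)))
         \<le> exp (x / (1 + y)) *
            (if x > 1 then (real n + 1 + y) powr (-1) * (1 / (x - 1))
             else if x = 1 then (real n + 1 + y) powr (-1) * (1 + ln (real n + y))
             else (real n + 1 + y) powr (- x) * ((1 + y) powr (x - 2) * (x - 2 - y) / (x - 1))))"
proof -
  have "x \<le> 1 + y"
    using assms by (simp add: pos_divide_le_eq)
  with assms have "(\<Sum>i=1..n. (1 / (real i + y)^2) * (\<Prod>j=i+1..n. 1 - x / (real j + y)))
      \<le> (\<Sum>i=1..n. exp (x / (1 + y)) * (real n + 1 + y) powr (- x) * (real i + y) powr (x - 2))"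
    by (intro sum_mono inverse_square_mult_prod_le_powr) auto
  also have "\<dots> = exp (x / (1 + y)) *
      ((real n + 1 + y) powr (- x) * (\<Sum>i=1..n. (real i + y) powr (x - 2)))"
    by (simp add: sum_distrib_left mult.assoc)
  finally show ?thesis
    using prod_one_minus_le_powr[of x y m n] \<open>x \<le> 1 + y\<close> assms
      mult_left_mono[OF powr_minus_mult_sum_powr_le[of y n x] exp_ge_zero]
    by (meson order_trans less_imp_le)
qed

end
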